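(* Let $m$ divide $n$ and let $f\colon\{0,\dots,n-1\}^d\to\{0,1\}$ be $k$-monotone. Then there is an $m$-block function $h\colon\{0,\dots,n-1\}^d\to\{0,1\}$ such that $\mathrm{dist}(f,h)<kd/m$.
   Context: $\{0,\dots,n-1\}^d$ is ordered coordinatewise; $f$ is $k$-monotone if there is no chain $x_1\preceq\cdots\preceq x_{k+1}$ with $f(x_1)=1$ and $f(x_i)\neq f(x_{i+1})$ for all $i\in[k]$. $\mathrm{dist}(f,h)$ is the fraction of points where $f,h$ differ. The domain is partitioned into $m^d$ blocks: for $x\in\{0,\dots,m-1\}^d$, the block of $x$ is $\{(n/m)x+z : z\in\{0,\dots,n/m-1\}^d\}$. A function is an $m$-block function if it is constant on each block. *)

theory Defs
  imports Complex_Main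
begin

definition grid :: "nat \<Rightarrow> nat \<Rightarrow> nat list set" where
  "grid n d = {x. length x = d \<and> (\<forall>i<d. x ! i < n)}"

definition cw_le :: "nat list \<Rightarrow> nat list \<Rightarrow> bool" where
  "cw_le x y \<longleftrightarrow> length x = length y \<and> (\<forall>i<length x. x ! i \<le> y ! i)"

text \<open>Boolean functions: True stands for 1, False for 0.
  f is k-monotone on the grid if there is no chain c 0 \<preceq> ... \<preceq> c k of grid points
  with f (c 0) = 1 and f (c i) \<noteq> f (c (i+1)) for all i < k.\<close>
definition k_monotone :: "nat \<Rightarrow> nat \<Rightarrow> nat \<Rightarrow> (nat list \<Rightarrow> bool) \<Rightarrow> bool" where
  "k_monotone n d k f \<longleftrightarrow>
     \<not> (\<exists>c :: nat \<Rightarrow> nat list.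
          (\<forall>i\<le>k. c i \<in> grid n d) \<and> (\<forall>i<k. cw_le (c i) (c (Suc i))) \<and>
          f (c 0) \<and> (\<forall>i<k. f (c i) \<noteq> f (c (Suc i))))"

definition dist_fn :: "nat \<Rightarrow> nat \<Rightarrow> (nat list \<Rightarrow> bool) \<Rightarrow> (nat list \<Rightarrow> bool) \<Rightarrow> real" where
  "dist_fn n d f h = real (card {x \<in> grid n d. f x \<noteq> h x}) / real (card (grid n d))"

definition block_fn :: "nat \<Rightarrow> nat \<Rightarrow> nat \<Rightarrow> (nat list \<Rightarrow> bool) \<Rightarrow> bool" where
  "block_fn n d m h \<longleftrightarrow>
     (\<forall>x\<in>grid n d. \<forall>y\<in>grid n d.
        (\<forall>i<d. x ! i div (n div m) = y ! i div (n div m)) \<longrightarrow> h x = h y)"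

end

theory Submission
  imports Defs
begin

text \<open>Write \<open>n = m s\<close> and round \<open>f\<close> to the value it takes at the least corner of each
  block. Errors only occur in blocks on which \<open>f\<close> is not constant, at most \<open>s^d - 1\<close> per block.
  Blocks on a common diagonal \<open>c + t (1, \<dots>, 1)\<close> are strictly increasing in every coordinate, so
  \<open>k + 1\<close> non-constant blocks on one diagonal would carry an alternating chain of length \<open>k + 1\<close>
  starting with 1; hence each diagonal contains at most \<open>k\<close> of them. The diagonals of the
  \<open>m^d\<close> block indices start at the \<open>m^d - (m - 1)^d \<le> d m^(d - 1)\<close> indices having a zero
  coordinate, so at most \<open>k d m^(d - 1) (s^d - 1) < (k d / m) n^d\<close> points are misclassified.\<close>

lemma grid_eq_lists: "grid n d = {xs. set xs \<subseteq> {..<n} \<and> length xs = d}"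
  by (auto simp: grid_def in_set_conv_nth) (meson lessThan_iff nth_mem subsetD)

lemma card_grid: "card (grid n d) = n ^ d"
  unfolding grid_eq_lists by (simp add: card_lists_length_eq)

lemma finite_grid: "finite (grid n d)"
  unfolding grid_eq_lists by (simp add: finite_lists_length_eq)

lemma power_diff_pred_power_le: "(m::nat) ^ d - (m - 1) ^ d \<le> d * m ^ (d - 1)"
proof (induction d)
  case (Suc d)
  have le: "(m - 1) ^ d \<le> m ^ d" by (simp add: power_mono)
  show ?case
  proof (cases "d = 0 \<or> m = 0")
    case False
    have "m ^ Suc d - (m - 1) ^ Suc d = m * (m ^ d - (m - 1) ^ d) + (m - 1) ^ d"
      using le False by (simp add: algebra_simps diff_mult_distrib2 diff_mult_distrib)
    also have "\<dots> \<le> m * (d * m ^ (d - 1)) + m ^ d"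
      using Suc.IH le by (simp add: add_mono)
    also have "\<dots> = Suc d * m ^ (Suc d - 1)"
      using False by (cases d) (simp_all add: algebra_simps)
    finally show ?thesis .
  qed auto
qed simp

lemma card_grid_with_zero: "card {c \<in> grid m d. 0 \<in> set c} = m ^ d - (m - 1) ^ d"
proof -
  have "grid m d - {c \<in> grid m d. 0 \<in> set c} = {xs. set xs \<subseteq> {1..<m} \<and> length xs = d}"
    unfolding grid_eq_lists by (auto simp: Suc_le_eq)
  then have "card (grid m d - {c \<in> grid m d. 0 \<in> set c}) = (m - 1) ^ d"
    by (simp add: card_lists_length_eq)
  moreover have "card {c \<in> grid m d. 0 \<in> set c} \<le> m ^ d"
    by (metis (no_types, lifting) card_grid card_mono finite_grid mem_Collect_eq subsetI)
  ultimately show ?thesis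
    by (subst (asm) card_Diff_subset) (auto simp: finite_grid card_grid)
qed

lemma strict_mono_enumeration:
  fixes T :: "nat set"
  assumes "finite T" "k < card T"
  shows "\<exists>t. (\<forall>j\<le>k. t j \<in> T) \<and> (\<forall>i<k. t i < t (Suc i))"
proof (intro exI conjI allI impI)
  let ?L = "sorted_list_of_set T"
  show "?L ! j \<in> T" if "j \<le> k" for j
    using that assms nth_mem[of j ?L] by simp
  show "?L ! i < ?L ! Suc i" if "i < k" for i
    using that assms sorted_wrt_nth_less[OF strict_sorted_list_of_set, of i "Suc i" T] by simp
qed

definition block_index :: "nat \<Rightarrow> nat list \<Rightarrow> nat list" where
  "block_index s x = map (\<lambda>a. a div s) x"

definition block_corner :: "nat \<Rightarrow> nat list \<Rightarrow> nat list" where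
  "block_corner s b = map (\<lambda>a. a * s) b"

definition block :: "nat \<Rightarrow> nat \<Rightarrow> nat \<Rightarrow> nat list \<Rightarrow> nat list set" where
  "block n d s b = {x \<in> grid n d. block_index s x = b}"

definition corner_rounding :: "nat \<Rightarrow> (nat list \<Rightarrow> bool) \<Rightarrow> nat list \<Rightarrow> bool" where
  "corner_rounding s f x = f (block_corner s (block_index s x))"

definition mixed_block :: "nat \<Rightarrow> nat \<Rightarrow> nat \<Rightarrow> (nat list \<Rightarrow> bool) \<Rightarrow> nat list \<Rightarrow> bool" where
  "mixed_block n d s f b \<longleftrightarrow> (\<exists>x\<in>block n d s b. \<exists>y\<in>block n d s b. f x \<noteq> f y)"

definition shift_all :: "nat \<Rightarrow> nat list \<Rightarrow> nat list" where
  "shift_all t c = map (\<lambda>a. a + t) c"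

lemma block_fn_corner_rounding: "block_fn n d m (corner_rounding (n div m) f)"
  unfolding block_fn_def
proof (intro ballI impI)
  fix x y assume "x \<in> grid n d" "y \<in> grid n d" "\<forall>i<d. x ! i div (n div m) = y ! i div (n div m)"
  then have "block_index (n div m) x = block_index (n div m) y"
    unfolding block_index_def by (intro nth_equalityI) (simp_all add: grid_def)
  then show "corner_rounding (n div m) f x = corner_rounding (n div m) f y"
    by (simp add: corner_rounding_def)
qed

lemma block_index_in_grid: "0 < s \<Longrightarrow> x \<in> grid (m * s) d \<Longrightarrow> block_index s x \<in> grid m d"
  by (auto simp: grid_def block_index_def less_mult_imp_div_less mult.commute)

lemma block_index_block_corner: "0 < s \<Longrightarrow> block_index s (block_corner s b) = b"
  by (simp add: block_index_def block_corner_def comp_def)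

lemma block_corner_in_block:
  assumes "0 < s" "b \<in> grid m d"
  shows "block_corner s b \<in> block (m * s) d s b"
proof -
  have "b ! i * s < m * s" if "i < d" for i
    using assms that by (simp add: grid_def)
  then have "block_corner s b \<in> grid (m * s) d"
    using assms(2) by (simp add: grid_def block_corner_def)
  then show ?thesis
    using assms(1) by (simp add: block_def block_index_block_corner)
qed

lemma finite_block: "finite (block n d s b)"
  using finite_grid by (simp add: block_def)

lemma card_block_le:
  assumes "0 < s"
  shows "card (block n d s b) \<le> s ^ d"
proof -
  let ?offset = "\<lambda>z. map2 (\<lambda>a c. a * s + c) b z"
  have "block n d s b \<subseteq> ?offset ` grid s d"
  proof
    fix x assume "x \<in> block n d s b"
    then have x: "x \<in> grid n d" "b = map (\<lambda>a. a div s) x"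
      by (auto simp: block_def block_index_def)
    then have "x = ?offset (map (\<lambda>a. a mod s) x)"
      by (intro nth_equalityI) auto
    moreover have "map (\<lambda>a. a mod s) x \<in> grid s d"
      using x(1) assms by (auto simp: grid_def)
    ultimately show "x \<in> ?offset ` grid s d"
      by blast
  qed
  then have "card (block n d s b) \<le> card (grid s d)"
    by (meson card_image_le card_mono finite_grid finite_imageI order_trans)
  then show ?thesis by (simp add: card_grid)
qed

lemma mixed_blocks_subset_grid:
  "0 < s \<Longrightarrow> {b. mixed_block (m * s) d s f b} \<subseteq> grid m d"
  using block_index_in_grid by (auto simp: mixed_block_def block_def)

lemma cw_le_if_block_index_less:
  assumes "length x = length y" "\<forall>q<length x. block_index s x ! q < block_index s y ! q"
  shows "cw_le x y"
  using assms div_le_mono[of "y ! q" "x ! q" s for q]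
  by (force simp: cw_le_def block_index_def not_le[symmetric])

lemma not_k_monotone_if_mixed_chain:
  assumes mixed: "\<And>j. j \<le> k \<Longrightarrow> mixed_block n d s f (bl j)"
    and increasing: "\<And>i q. i < k \<Longrightarrow> q < d \<Longrightarrow> bl i ! q < bl (Suc i) ! q"
  shows "\<not> k_monotone n d k f"
proof -
  have "\<forall>j. \<exists>y. j \<le> k \<longrightarrow> y \<in> block n d s (bl j) \<and> f y = even j"
  proof (intro allI impI)
    fix j
    show "\<exists>y. j \<le> k \<longrightarrow> y \<in> block n d s (bl j) \<and> f y = even j"
      using mixed[of j] unfolding mixed_block_def by (cases "even j") auto
  qed
  then obtain x where x: "\<forall>j. j \<le> k \<longrightarrow> x j \<in> block n d s (bl j) \<and> f (x j) = even j"
    by (rule choice[THEN exE])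
  have "cw_le (x i) (x (Suc i))" if "i < k" for i
    using x that increasing[OF that]
    by (intro cw_le_if_block_index_less[where s = s]) (auto simp: block_def grid_def)
  moreover have "x j \<in> grid n d" if "j \<le> k" for j
    using x that by (simp add: block_def)
  ultimately show ?thesis
    unfolding k_monotone_def using x by (auto intro!: exI[of _ x])
qed

lemma finite_mixed_shifts:
  assumes "c \<noteq> []"
  shows "finite {t. mixed_block n d s f (shift_all t c)}"
proof (rule finite_subset)
  show "{t. mixed_block n d s f (shift_all t c)} \<subseteq> {..<n}"
  proof
    fix t assume "t \<in> {t. mixed_block n d s f (shift_all t c)}"
    then obtain x where x: "x \<in> grid n d" "block_index s x = shift_all t c"
      by (auto simp: mixed_block_def block_def)
    then have "length x = length c"
      by (metis block_index_def shift_all_def length_map)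
    then have "0 < length x"
      using assms by simp
    then have "t \<le> x ! 0 div s"
      using arg_cong[OF x(2), of "\<lambda>l. l ! 0"] \<open>length x = length c\<close>
      by (simp add: block_index_def shift_all_def)
    also have "\<dots> \<le> x ! 0"
      by (rule div_le_dividend)
    also have "x ! 0 < n"
      using x(1) \<open>0 < length x\<close> unfolding grid_def by auto
    finally show "t \<in> {..<n}"
      by simp
  qed
qed simp

lemma card_mixed_shifts_le:
  assumes "k_monotone n d k f" "length c = d" "0 < d"
  shows "card {t. mixed_block n d s f (shift_all t c)} \<le> k"
proof (rule ccontr)
  let ?T = "{t. mixed_block n d s f (shift_all t c)}"
  assume "\<not> card ?T \<le> k"
  have "finite ?T"
    using assms by (intro finite_mixed_shifts) auto
  moreover have "k < card ?T"
    using \<open>\<not> card ?T \<le> k\<close> by simp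
  ultimately have "\<exists>t. (\<forall>j\<le>k. t j \<in> ?T) \<and> (\<forall>i<k. t i < t (Suc i))"
    by (rule strict_mono_enumeration)
  then obtain t where "\<forall>j\<le>k. t j \<in> ?T" "\<forall>i<k. t i < t (Suc i)"
    by blast
  then have "\<not> k_monotone n d k f"
    using assms(2)
    by (intro not_k_monotone_if_mixed_chain[where s = s and bl = "\<lambda>j. shift_all (t j) c"])
      (auto simp: shift_all_def)
  then show False
    using assms(1) by contradiction
qed

lemma grid_on_diagonals:
  assumes "0 < d" "b \<in> grid m d"
  shows "\<exists>c\<in>{c \<in> grid m d. 0 \<in> set c}. \<exists>t. b = shift_all t c"
proof -
  let ?t = "Min (set b)"
  let ?c = "map (\<lambda>a. a - ?t) b"
  have "?t \<in> set b"
    using assms by (auto simp: grid_def)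
  then have "0 \<in> set ?c"
    by force
  moreover have "?c \<in> grid m d"
    using assms by (auto simp: grid_def less_imp_diff_less)
  moreover have "b = shift_all ?t ?c"
    unfolding shift_all_def by (intro nth_equalityI) auto
  ultimately show ?thesis by blast
qed

lemma card_mixed_blocks_le:
  assumes "k_monotone (m * s) d k f" "0 < s" "0 < d"
  shows "card {b. mixed_block (m * s) d s f b} \<le> k * (m ^ d - (m - 1) ^ d)"
proof -
  let ?M = "{b. mixed_block (m * s) d s f b}"
  let ?S = "{c \<in> grid m d. 0 \<in> set c}"
  let ?diag = "\<lambda>c. (\<lambda>t. shift_all t c) ` {t. mixed_block (m * s) d s f (shift_all t c)}"
  have cover: "?M \<subseteq> (\<Union>c\<in>?S. ?diag c)"
  proof
    fix b assume "b \<in> ?M"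
    then have "b \<in> grid m d"
      using mixed_blocks_subset_grid[OF assms(2)] by blast
    then obtain c t where "c \<in> ?S" "b = shift_all t c"
      using grid_on_diagonals[OF assms(3)] by blast
    with \<open>b \<in> ?M\<close> show "b \<in> (\<Union>c\<in>?S. ?diag c)"
      by blast
  qed
  have finite_S: "finite ?S"
    using finite_grid by simp
  have diag_bound: "finite (?diag c) \<and> card (?diag c) \<le> k" if "c \<in> ?S" for c
  proof -
    have "length c = d"
      using that by (simp add: grid_def)
    then have "c \<noteq> []"
      using assms(3) by auto
    then have "finite {t. mixed_block (m * s) d s f (shift_all t c)}"
      by (rule finite_mixed_shifts)
    then show ?thesis
      using card_image_le card_mixed_shifts_le[OF assms(1) \<open>length c = d\<close> assms(3)]
      by (blast intro: le_trans)
  qed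
  have "card ?M \<le> card (\<Union>c\<in>?S. ?diag c)"
    using diag_bound by (intro card_mono[OF finite_UN_I[OF finite_S] cover]) blast
  also have "\<dots> \<le> (\<Sum>c\<in>?S. card (?diag c))"
    by (rule card_UN_le[OF finite_S])
  also have "\<dots> \<le> (\<Sum>c\<in>?S. k)"
    using diag_bound by (intro sum_mono) blast
  also have "\<dots> = k * (m ^ d - (m - 1) ^ d)"
    by (simp add: card_grid_with_zero)
  finally show ?thesis .
qed

lemma card_rounding_errors_le:
  assumes "0 < s"
  shows "card {x \<in> grid (m * s) d. f x \<noteq> corner_rounding s f x}
           \<le> card {b. mixed_block (m * s) d s f b} * (s ^ d - 1)"
proof -
  let ?E = "{x \<in> grid (m * s) d. f x \<noteq> corner_rounding s f x}"
  let ?M = "{b. mixed_block (m * s) d s f b}"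
  let ?rest = "\<lambda>b. block (m * s) d s b - {block_corner s b}"
  have cover: "?E \<subseteq> (\<Union>b\<in>?M. ?rest b)"
  proof
    fix x assume "x \<in> ?E"
    then have x: "x \<in> grid (m * s) d" "f x \<noteq> f (block_corner s (block_index s x))"
      by (auto simp: corner_rounding_def)
    let ?b = "block_index s x"
    have "block_corner s ?b \<in> block (m * s) d s ?b"
      using block_corner_in_block[OF assms block_index_in_grid[OF assms x(1)]] .
    moreover have "x \<in> block (m * s) d s ?b"
      using x(1) by (simp add: block_def)
    ultimately have "?b \<in> ?M" and "x \<in> ?rest ?b"
      using x(2) unfolding mixed_block_def by auto
    then show "x \<in> (\<Union>b\<in>?M. ?rest b)"
      by blast
  qed
  have finite_M: "finite ?M"
    using mixed_blocks_subset_grid[OF assms] finite_grid by (rule finite_subset)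
  have "card ?E \<le> card (\<Union>b\<in>?M. ?rest b)"
    using finite_M by (intro card_mono[OF _ cover]) (simp add: finite_block)
  also have "\<dots> \<le> (\<Sum>b\<in>?M. card (?rest b))"
    by (rule card_UN_le[OF finite_M])
  also have "\<dots> \<le> (\<Sum>b\<in>?M. s ^ d - 1)"
  proof (rule sum_mono)
    fix b assume "b \<in> ?M"
    then have "block_corner s b \<in> block (m * s) d s b"
      using block_corner_in_block[OF assms] mixed_blocks_subset_grid[OF assms] by blast
    then show "card (?rest b) \<le> s ^ d - 1"
      using card_block_le[OF assms] by (simp add: finite_block diff_le_mono)
  qed
  finally show ?thesis
    by simp
qed

lemma dist_fn_corner_rounding_lt:
  assumes "k_monotone (m * s) d k f" "0 < m" "0 < s" "0 < d" "0 < k"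
  shows "dist_fn (m * s) d f (corner_rounding s f) < real k * real d / real m"
proof -
  let ?errors = "card {x \<in> grid (m * s) d. f x \<noteq> corner_rounding s f x}"
  have "?errors \<le> k * (m ^ d - (m - 1) ^ d) * (s ^ d - 1)"
    using card_rounding_errors_le[OF assms(3)] card_mixed_blocks_le[OF assms(1,3,4)]
    by (meson le_trans mult_le_mono1)
  also have "\<dots> \<le> k * (d * m ^ (d - 1)) * (s ^ d - 1)"
    using power_diff_pred_power_le by (intro mult_le_mono1 mult_le_mono2)
  also have "\<dots> < k * (d * m ^ (d - 1)) * s ^ d"
    using assms(2-5) by simp
  finally have "real ?errors < real (k * (d * m ^ (d - 1)) * s ^ d)"
    by (simp only: of_nat_less_iff)
  also have "\<dots> = real k * real d / real m * real (card (grid (m * s) d))"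
    using assms(2,4) power_eq_if[of m d] by (simp add: card_grid power_mult_distrib)
  finally show ?thesis
    using assms(2,3) by (simp add: dist_fn_def card_grid pos_divide_less_eq)
qed

theorem lemma6p1:
  fixes n m d k :: nat and f :: "nat list \<Rightarrow> bool"
  assumes "0 < m" "m dvd n" "1 \<le> d" "1 \<le> k"
    and "k_monotone n d k f"
  shows "\<exists>h :: nat list \<Rightarrow> bool. block_fn n d m h \<and>
           dist_fn n d f h < real k * real d / real m"
proof (cases "n = 0")
  case True
  then have "grid n d = {}"
    using assms(3) by (auto simp: grid_def) (meson Suc_le_lessD)
  then show ?thesis
    using assms by (auto simp: dist_fn_def block_fn_def)
next
  case False
  define s where "s = n div m"
  have n: "n = m * s" and "0 < s"
    using assms(2) False by (auto simp: s_def)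
  then have "dist_fn n d f (corner_rounding s f) < real k * real d / real m"
    using assms dist_fn_corner_rounding_lt[of m s d k f] by simp
  moreover have "block_fn n d m (corner_rounding s f)"
    unfolding s_def by (rule block_fn_corner_rounding)
  ultimately show ?thesis
    by blast
qed

end
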